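(* Let $s_1,\dots,s_{d-1}$ be positive integers, $s_0=s_d=1$, with $s_{i-1}s_i\le n_i$ for all $i$, and let $T=\sum_{\alpha_1,\dots,\alpha_{d-1}} e_1^{\alpha_1}\otimes e_2^{\iota_2(\alpha_1,\alpha_2)}\otimes\cdots\otimes e_{d-1}^{\iota_{d-1}(\alpha_{d-2},\alpha_{d-1})}\otimes e_d^{\alpha_{d-1}}$. The stabilizer $H=\{g\in G:g\cdot T=T\}$ consists exactly of the elements $$\begin{bmatrix}A_1&M_1\\0&B_1\end{bmatrix}\times\begin{bmatrix}A_1^{-\mathsf T}\otimes A_2&M_2\\0&B_2\end{bmatrix}\times\cdots\times\begin{bmatrix}A_{d-2}^{-\mathsf T}\otimes A_{d-1}&M_{d-1}\\0&B_{d-1}\end{bmatrix}\times\begin{bmatrix}A_{d-1}^{-\mathsf T}&M_d\\0&B_d\end{bmatrix},$$ where $A_i\in\mathrm{GL}(s_i)$ ($1\le i\le d-1$), $B_i\in\mathrm{GL}(n_i-s_{i-1}s_i)$, and $M_i$ are arbitrary $s_{i-1}s_i\times(n_i-s_{i-1}s_i)$ matrices.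
   Context: Fix integers $d\ge 3$ and $n_1,\dots,n_d\ge 2$. $V=\mathbb{R}^{n_1}\otimes\cdots\otimes\mathbb{R}^{n_d}$, and $G=\mathrm{GL}(n_1)\times\cdots\times\mathrm{GL}(n_d)$ acts on $V$ by $(g_1,\dots,g_d)\cdot(v_1\otimes\cdots\otimes v_d)=(g_1v_1)\otimes\cdots\otimes(g_dv_d)$, extended linearly. $e_i^1,\dots,e_i^{n_i}$ is the standard basis of $\mathbb{R}^{n_i}$. For $2\le i\le d-1$, $\iota_i:[s_{i-1}]\times[s_i]\to[s_{i-1}s_i]$ is the lexicographic bijection with the first argument most significant, and the Kronecker product uses the matching convention $(A\otimes B)_{\iota_i(a,b),\iota_i(a',b')}=A_{aa'}B_{bb'}$. *)

theory Defs
  imports "Jordan_Normal_Form.Matrix"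
begin

(* Coordinates are 0-based: e_i^1..e_i^{n_i} correspond to indices 0..n_i-1.
   Tensor factors are numbered 1..d. *)

definition multi_idx :: "nat \<Rightarrow> (nat \<Rightarrow> nat) \<Rightarrow> (nat \<Rightarrow> nat) set" where
  "multi_idx d n = {j. (\<forall>i\<in>{1..d}. j i < n i) \<and> (\<forall>i. i \<notin> {1..d} \<longrightarrow> j i = 0)}"

(* A tensor in V = R^{n_1} (x) ... (x) R^{n_d}: its coordinate function on multi_idx d n. *)
type_synonym tensor = "(nat \<Rightarrow> nat) \<Rightarrow> real"

definition in_G :: "nat \<Rightarrow> (nat \<Rightarrow> nat) \<Rightarrow> (nat \<Rightarrow> real mat) \<Rightarrow> bool" where
  "in_G d n g = (\<forall>i\<in>{1..d}. g i \<in> carrier_mat (n i) (n i) \<and> invertible_mat (g i))"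

definition act :: "nat \<Rightarrow> (nat \<Rightarrow> nat) \<Rightarrow> (nat \<Rightarrow> real mat) \<Rightarrow> tensor \<Rightarrow> tensor" where
  "act d n g X = (\<lambda>j. \<Sum>k\<in>multi_idx d n. (\<Prod>i\<in>{1..d}. g i $$ (j i, k i)) * X k)"

definition iota :: "(nat \<Rightarrow> nat) \<Rightarrow> nat \<Rightarrow> nat \<Rightarrow> nat \<Rightarrow> nat" where
  "iota s i a b = a * s i + b"

(* Kronecker product with the matching convention (A (x) B)_{iota(a,b),iota(a',b')} = A_{aa'} B_{bb'} *)
definition kron :: "'a::times mat \<Rightarrow> 'a mat \<Rightarrow> 'a mat" where
  "kron A B = mat (dim_row A * dim_row B) (dim_col A * dim_col B)
     (\<lambda>(i, j). A $$ (i div dim_row B, j div dim_col B) * B $$ (i mod dim_row B, j mod dim_col B))"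

definition minv :: "real mat \<Rightarrow> real mat" where
  "minv A = (SOME B. B \<in> carrier_mat (dim_row A) (dim_row A) \<and> inverts_mat A B \<and> inverts_mat B A)"

definition minvT :: "real mat \<Rightarrow> real mat" where
  "minvT A = transpose_mat (minv A)"

definition alphas :: "nat \<Rightarrow> (nat \<Rightarrow> nat) \<Rightarrow> (nat \<Rightarrow> nat) set" where
  "alphas d s = {a. (\<forall>i\<in>{1..d-1}. a i < s i) \<and> (\<forall>i. i \<notin> {1..d-1} \<longrightarrow> a i = 0)}"

(* index of the basis vector in the i-th factor of the summand for alpha *)
definition T_index :: "nat \<Rightarrow> (nat \<Rightarrow> nat) \<Rightarrow> (nat \<Rightarrow> nat) \<Rightarrow> nat \<Rightarrow> nat" where
  "T_index d s a i = (if i = 1 then a 1 else if i = d then a (d - 1) else iota s i (a (i - 1)) (a i))"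

definition T_tensor :: "nat \<Rightarrow> (nat \<Rightarrow> nat) \<Rightarrow> tensor" where
  "T_tensor d s = (\<lambda>j. \<Sum>a\<in>alphas d s. \<Prod>i\<in>{1..d}. (if j i = T_index d s a i then 1 else 0))"

definition diag_block :: "nat \<Rightarrow> (nat \<Rightarrow> real mat) \<Rightarrow> nat \<Rightarrow> real mat" where
  "diag_block d A i = (if i = 1 then A 1 else if i = d then minvT (A (d - 1))
                        else kron (minvT (A (i - 1))) (A i))"

definition stab_form :: "nat \<Rightarrow> (nat \<Rightarrow> nat) \<Rightarrow> (nat \<Rightarrow> nat) \<Rightarrow> (nat \<Rightarrow> real mat) \<Rightarrow> bool" where
  "stab_form d n s g = (\<exists>A B M.
     (\<forall>i\<in>{1..d-1}. A i \<in> carrier_mat (s i) (s i) \<and> invertible_mat (A i)) \<and>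
     (\<forall>i\<in>{1..d}. B i \<in> carrier_mat (n i - s (i-1) * s i) (n i - s (i-1) * s i) \<and> invertible_mat (B i)) \<and>
     (\<forall>i\<in>{1..d}. M i \<in> carrier_mat (s (i-1) * s i) (n i - s (i-1) * s i)) \<and>
     (\<forall>i\<in>{1..d}. g i = four_block_mat (diag_block d A i) (M i)
                            (0\<^sub>m (n i - s (i-1) * s i) (s (i-1) * s i)) (B i)))"

end

(*
  T is a matrix product state: its i-th core sends the index value \<iota>(a, b) to the matrix unit
  E_ab of size s_{i-1} x s_i, and g acts on the cores by replacing them with the leading
  s_{i-1} s_i columns of g_i.  If g T = T, cutting the tensor between factors i and i + 1 and
  moving g_{i+1}, ..., g_d to the other side shows that the partial contractions of g T and of T
  up to factor i differ by a matrix A_i, with A_0 = A_d = 1.  Comparing two consecutive cuts gives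
  A_{i-1} G_i^g[p] = G_i[p] A_i for the cores, which forces the leading columns of g_i to be
  [A_{i-1}^{-T} (x) A_i; 0]; invertibility of g_i then makes A_i invertible, inductively in i.
  Conversely, cores of this shape are gauge equivalent to those of T, so the contraction and
  hence T is unchanged.
*)

theory Submission
  imports Defs "Jordan_Normal_Form.Determinant"
begin

section \<open>Sums over multi-indices\<close>

lemma multi_idx_0: "multi_idx 0 c = {\<lambda>_. 0}"
  unfolding multi_idx_def by auto

lemma multi_idx_Suc:
  "multi_idx (Suc m) c = (\<lambda>(f, x). f(Suc m := x)) ` (multi_idx m c \<times> {..<c (Suc m)})"
proof (intro equalityI subsetI)
  fix f assume f: "f \<in> multi_idx (Suc m) c"
  then have "(f(Suc m := 0), f (Suc m)) \<in> multi_idx m c \<times> {..<c (Suc m)}"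
    unfolding multi_idx_def by auto
  then show "f \<in> (\<lambda>(f, x). f(Suc m := x)) ` (multi_idx m c \<times> {..<c (Suc m)})"
    by (rule rev_image_eqI) simp
qed (auto simp: multi_idx_def)

lemma inj_on_multi_idx_Suc:
  "inj_on (\<lambda>(f, x). f(Suc m := x)) (multi_idx m c \<times> {..<c (Suc m)})"
proof (rule inj_onI, clarsimp)
  fix f x g y
  assume "f \<in> multi_idx m c" "g \<in> multi_idx m c" and e: "f(Suc m := x) = g(Suc m := y)"
  then have "f (Suc m) = 0" "g (Suc m) = 0"
    unfolding multi_idx_def by auto
  then show "f = g \<and> x = y" using e by (metis fun_upd_same fun_upd_triv fun_upd_upd)
qed

lemma sum_multi_idx_Suc:
  "(\<Sum>f\<in>multi_idx (Suc m) c. F f) = (\<Sum>f\<in>multi_idx m c. \<Sum>x<c (Suc m). F (f(Suc m := x)))"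
proof -
  have "sum F (multi_idx (Suc m) c) = (\<Sum>(f, x)\<in>multi_idx m c \<times> {..<c (Suc m)}. F (f(Suc m := x)))"
    unfolding multi_idx_Suc by (subst sum.reindex[OF inj_on_multi_idx_Suc]) (simp add: case_prod_unfold)
  then show ?thesis by (simp add: sum.cartesian_product)
qed

lemma sum_prod_multi_idx:
  fixes F :: "nat \<Rightarrow> nat \<Rightarrow> 'a :: comm_semiring_1"
  shows "(\<Sum>k\<in>multi_idx m c. \<Prod>i\<in>{1..m}. F i (k i)) = (\<Prod>i\<in>{1..m}. \<Sum>x<c i. F i x)"
proof (induction m)
  case 0 then show ?case by (simp add: multi_idx_0)
next
  case (Suc m)
  have "\<And>f x. (\<Prod>i\<in>{1..m}. F i ((f(Suc m := x)) i)) = (\<Prod>i\<in>{1..m}. F i (f i))"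
    by (intro prod.cong) auto
  then have "(\<Sum>k\<in>multi_idx (Suc m) c. \<Prod>i\<in>{1..Suc m}. F i (k i))
      = (\<Sum>f\<in>multi_idx m c. \<Prod>i\<in>{1..m}. F i (f i)) * (\<Sum>x<c (Suc m). F (Suc m) x)"
    by (simp add: sum_multi_idx_Suc sum_product)
  then show ?case using Suc.IH by simp
qed

lemma mixed_radix_less: "(a::nat) < x \<Longrightarrow> b < y \<Longrightarrow> a * y + b < x * y"
  by (metis add.commute mult.commute mult_Suc_right less_eq_Suc_le add_less_le_mono
      mult_le_mono2 nat_add_left_cancel_less)

lemma mixed_radix_eq_iff:
  "(b::nat) < y \<Longrightarrow> b' < y \<Longrightarrow> a * y + b = a' * y + b' \<longleftrightarrow> a = a' \<and> b = b'"
  by (metis add.commute div_mult_self1 less_nat_zero_code mod_less mod_mult_self1 div_less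
      add_cancel_right_left)

lemma sum_delta_mult:
  "c < (S::nat) \<Longrightarrow> (\<Sum>a<S. (if a = c then 1 else 0) * (F a :: 'b :: semiring_1)) = F c"
  by (simp add: if_distrib[of "\<lambda>x. x * _"] cong: if_cong)

lemma sum_mixed_radix_delta:
  assumes "0 < (y::nat)"
  shows "(\<Sum>b<y. (if p = a * y + b then 1 else 0) * (f b :: 'b :: semiring_1))
       = (if p div y = a then f (p mod y) else 0)"
proof (cases "p div y = a")
  case True
  then have "p = a * y + b \<longleftrightarrow> b = p mod y" if "b < y" for b
    using mixed_radix_eq_iff[OF that, of "p mod y" a a] assms by (metis div_mult_mod_eq mod_less_divisor)
  then show ?thesis using True assms by (simp add: if_distrib[of "\<lambda>x. x * _"] cong: if_cong)
next
  case False
  then have "p \<noteq> a * y + b" if "b < y" for b using that by auto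
  then show ?thesis using False by (simp add: if_distrib[of "\<lambda>x. x * _"] cong: if_cong)
qed

lemma index_mult_mat_sum:
  "A \<in> carrier_mat m k \<Longrightarrow> B \<in> carrier_mat k l \<Longrightarrow> p < m \<Longrightarrow> q < l \<Longrightarrow>
   (A * B) $$ (p, q) = (\<Sum>x<k. A $$ (p, x) * B $$ (x, q))"
  by (auto simp: scalar_prod_def lessThan_atLeast0 intro!: sum.cong)

lemma index_mult_mat_vec_sum:
  "A \<in> carrier_mat m k \<Longrightarrow> v \<in> carrier_vec k \<Longrightarrow> p < m \<Longrightarrow>
   (A *\<^sub>v v) $ p = (\<Sum>x<k. A $$ (p, x) * v $ x)"
  by (auto simp: scalar_prod_def lessThan_atLeast0 intro!: sum.cong)

lemma minv_inverse:
  assumes A: "A \<in> carrier_mat m m" and inv: "invertible_mat A"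
  shows "minv A \<in> carrier_mat m m" "A * minv A = 1\<^sub>m m" "minv A * A = 1\<^sub>m m"
proof -
  obtain B where AB: "A * B = 1\<^sub>m m" and BA: "B * A = 1\<^sub>m (dim_row B)"
    using inv A unfolding invertible_mat_def inverts_mat_def by auto
  have "B \<in> carrier_mat m m"
    using AB BA A by (metis carrier_matD(2) index_mult_mat(3) index_one_mat(3) carrier_matI)
  then have "\<exists>B. B \<in> carrier_mat (dim_row A) (dim_row A) \<and> inverts_mat A B \<and> inverts_mat B A"
    using AB BA A unfolding inverts_mat_def by auto
  from someI_ex[OF this] show "minv A \<in> carrier_mat m m" "A * minv A = 1\<^sub>m m" "minv A * A = 1\<^sub>m m"
    using A unfolding minv_def inverts_mat_def by auto
qed

lemma invertible_one_mat: "invertible_mat (1\<^sub>m k :: 'a :: semiring_1 mat)"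
  unfolding invertible_mat_def inverts_mat_def by (auto intro: exI[of _ "1\<^sub>m k"])

lemma minv_one: "minv (1\<^sub>m k :: real mat) = 1\<^sub>m k"
  using minv_inverse[OF one_carrier_mat invertible_one_mat, of k]
  by (metis left_mult_one_mat)

lemma sum_minv_mult_entry:
  "A \<in> carrier_mat m m \<Longrightarrow> invertible_mat A \<Longrightarrow> p < m \<Longrightarrow> q < m \<Longrightarrow>
   (\<Sum>x<m. minv A $$ (p, x) * A $$ (x, q)) = (if p = q then 1 else 0)"
  using index_mult_mat_sum[of "minv A" m m A m p q] minv_inverse[of A m] by simp

lemma sum_mult_minv_entry:
  "A \<in> carrier_mat m m \<Longrightarrow> invertible_mat A \<Longrightarrow> p < m \<Longrightarrow> q < m \<Longrightarrow>
   (\<Sum>x<m. A $$ (p, x) * minv A $$ (x, q)) = (if p = q then 1 else 0)"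
  using index_mult_mat_sum[of A m m "minv A" m p q] minv_inverse[of A m] by simp

lemma vec_padded_nonzero:
  assumes "v \<in> carrier_vec k" and "v \<noteq> 0\<^sub>v k" and "k \<le> m"
  shows "vec m (\<lambda>q. if q < k then v $ q else 0) \<noteq> 0\<^sub>v m"
proof
  assume z: "vec m (\<lambda>q. if q < k then v $ q else 0) = 0\<^sub>v m"
  have "v $ q = 0" if "q < k" for q
    using arg_cong[OF z, of "\<lambda>w. w $ q"] that assms(3) by simp
  then have "v = 0\<^sub>v k" using assms(1) by (intro eq_vecI) auto
  with assms(2) show False ..
qed

lemma invertible_mat_iff_det:
  assumes A: "(A :: real mat) \<in> carrier_mat m m"
  shows "invertible_mat A \<longleftrightarrow> det A \<noteq> 0"
proof
  assume "invertible_mat A"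
  then have "det A * det (minv A) = 1"
    using minv_inverse[OF A] A by (metis det_mult det_one)
  then show "det A \<noteq> 0" by auto
next
  assume "det A \<noteq> 0"
  then have "A \<in> Units (ring_mat TYPE(real) m undefined)"
    by (rule det_non_zero_imp_unit[OF A])
  then obtain B where "B \<in> carrier_mat m m" "B * A = 1\<^sub>m m" "A * B = 1\<^sub>m m"
    unfolding Units_def ring_mat_def by auto
  then show "invertible_mat A"
    using A unfolding invertible_mat_def inverts_mat_def by auto
qed

lemma four_block_mat_lower_left_zero_split:
  assumes G: "G \<in> carrier_mat (m + k) (m + k)" and D: "D \<in> carrier_mat m m"
    and entries: "\<forall>p<m + k. \<forall>q<m. G $$ (p, q) = (if p < m then D $$ (p, q) else 0)"
  shows "G = four_block_mat D (mat m k (\<lambda>(p, q). G $$ (p, q + m))) (0\<^sub>m k m)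
                (mat k k (\<lambda>(p, q). G $$ (p + m, q + m)))"
  using G D entries by (intro eq_matI) auto

lemma invertible_four_block_mat_lower_right:
  assumes "D \<in> carrier_mat m m" and "M \<in> carrier_mat m k" and B: "(B :: real mat) \<in> carrier_mat k k"
    and "invertible_mat (four_block_mat D M (0\<^sub>m k m) B)"
  shows "invertible_mat B"
proof -
  have "det (four_block_mat D M (0\<^sub>m k m) B) = det D * det B"
    using assms by (intro det_four_block_mat_lower_left_zero) auto
  moreover have "det (four_block_mat D M (0\<^sub>m k m) B) \<noteq> 0"
    using assms invertible_mat_iff_det[of "four_block_mat D M (0\<^sub>m k m) B" "m + k"] by auto
  ultimately show ?thesis using invertible_mat_iff_det[OF B] by auto
qed

lemma act_cong: "\<forall>l\<in>{1..d}. g l = g' l \<Longrightarrow> act d n g X = act d n g' X"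
  unfolding act_def by (intro ext sum.cong refl arg_cong2[where f = "(*)"] prod.cong) auto

lemma act_cong_tensor: "\<forall>k\<in>multi_idx d n. X k = Y k \<Longrightarrow> act d n g X j = act d n g Y j"
  unfolding act_def by (intro sum.cong refl) auto

lemma act_mult:
  assumes "\<forall>l\<in>{1..d}. g l \<in> carrier_mat (n l) (n l) \<and> h l \<in> carrier_mat (n l) (n l)"
    and k: "k \<in> multi_idx d n"
  shows "act d n h (act d n g X) k = act d n (\<lambda>l. h l * g l) X k"
proof -
  have "act d n h (act d n g X) k
      = (\<Sum>j\<in>multi_idx d n. \<Sum>m\<in>multi_idx d n. (\<Prod>i\<in>{1..d}. h i $$ (k i, j i) * g i $$ (j i, m i)) * X m)"
    unfolding act_def by (simp add: sum_distrib_left mult.assoc prod.distrib)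
  also have "\<dots> = (\<Sum>m\<in>multi_idx d n. (\<Sum>j\<in>multi_idx d n. \<Prod>i\<in>{1..d}. h i $$ (k i, j i) * g i $$ (j i, m i)) * X m)"
    by (subst sum.swap) (simp add: sum_distrib_right)
  also have "\<dots> = (\<Sum>m\<in>multi_idx d n. (\<Prod>i\<in>{1..d}. \<Sum>x<n i. h i $$ (k i, x) * g i $$ (x, m i)) * X m)"
  proof (intro sum.cong refl arg_cong2[where f = "(*)"])
    fix m
    show "(\<Sum>j\<in>multi_idx d n. \<Prod>i\<in>{1..d}. h i $$ (k i, j i) * g i $$ (j i, m i))
        = (\<Prod>i\<in>{1..d}. \<Sum>x<n i. h i $$ (k i, x) * g i $$ (x, m i))"
      by (rule sum_prod_multi_idx[of "\<lambda>i x. h i $$ (k i, x) * g i $$ (x, m i)"])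
  qed
  also have "\<dots> = act d n (\<lambda>l. h l * g l) X k"
    unfolding act_def
  proof (intro sum.cong refl arg_cong2[where f = "(*)"] prod.cong)
    fix m i assume "m \<in> multi_idx d n" "i \<in> {1..d}"
    then show "(\<Sum>x<n i. h i $$ (k i, x) * g i $$ (x, m i)) = (h i * g i) $$ (k i, m i)"
      using assms index_mult_mat_sum[of "h i" "n i" "n i" "g i" "n i"] unfolding multi_idx_def by auto
  qed
  finally show ?thesis .
qed

section \<open>Contractions of matrix product states\<close>

text \<open>Cores of a matrix product state with bond dimensions \<open>s\<close>: \<open>G l p (a * s l + b)\<close> is entry
  \<open>(a, b)\<close> of the \<open>s (l - 1) \<times> s l\<close> matrix \<open>G\<^sub>l[p]\<close>.  Then \<open>left_contr s G j i\<close> is the row vector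
  \<open>G\<^sub>1[j 1] \<cdots> G\<^sub>i[j i]\<close> and \<open>right_contr d s G j i\<close> the column vector \<open>G\<^sub>i\<^sub>+\<^sub>1[j (i + 1)] \<cdots> G\<^sub>d[j d]\<close>.\<close>

type_synonym cores = "nat \<Rightarrow> nat \<Rightarrow> nat \<Rightarrow> real"

fun left_contr :: "(nat \<Rightarrow> nat) \<Rightarrow> cores \<Rightarrow> (nat \<Rightarrow> nat) \<Rightarrow> nat \<Rightarrow> nat \<Rightarrow> real" where
  "left_contr s G j 0 b = (if b = 0 then 1 else 0)"
| "left_contr s G j (Suc i) b = (\<Sum>a<s i. left_contr s G j i a * G (Suc i) (j (Suc i)) (a * s (Suc i) + b))"

function right_contr :: "nat \<Rightarrow> (nat \<Rightarrow> nat) \<Rightarrow> cores \<Rightarrow> (nat \<Rightarrow> nat) \<Rightarrow> nat \<Rightarrow> nat \<Rightarrow> real" where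
  "right_contr d s G j i a = (if d \<le> i then (if a = 0 then 1 else 0)
     else (\<Sum>b<s (Suc i). G (Suc i) (j (Suc i)) (a * s (Suc i) + b) * right_contr d s G j (Suc i) b))"
  by auto
termination by (relation "measure (\<lambda>(d, s, G, j, i, a). d - i)") auto

declare right_contr.simps [simp del]

lemma right_contr_end: "d \<le> i \<Longrightarrow> right_contr d s G j i a = (if a = 0 then 1 else 0)"
  by (simp add: right_contr.simps)

lemma right_contr_step:
  "i < d \<Longrightarrow> right_contr d s G j i a
     = (\<Sum>b<s (Suc i). G (Suc i) (j (Suc i)) (a * s (Suc i) + b) * right_contr d s G j (Suc i) b)"
  by (subst right_contr.simps) simp

definition mat_cores :: "(nat \<Rightarrow> real mat) \<Rightarrow> cores" where
  "mat_cores g l p q = g l $$ (p, q)"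

definition delta_cores :: cores where
  "delta_cores l p q = (if p = q then 1 else 0)"

lemma left_contr_cong:
  assumes "\<forall>l\<in>{1..i}. \<forall>q<s (l - 1) * s l. G l (j l) q = G' l (j' l) q" and "b < s i"
  shows "left_contr s G j i b = left_contr s G' j' i b"
  using assms
proof (induction i arbitrary: b)
  case (Suc i)
  have "G (Suc i) (j (Suc i)) (a * s (Suc i) + b) = G' (Suc i) (j' (Suc i)) (a * s (Suc i) + b)"
    if "a < s i" for a
    using Suc.prems mixed_radix_less[OF that \<open>b < s (Suc i)\<close>] by auto
  then show ?case using Suc by simp
qed simp

lemma right_contr_cong:
  assumes "\<forall>l\<in>{i<..d}. \<forall>q<s (l - 1) * s l. G l (j l) q = G' l (j' l) q" and "a < s i"
  shows "right_contr d s G j i a = right_contr d s G' j' i a"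
  using assms
proof (induction d s G j i a rule: right_contr.induct)
  case (1 d s G j i a)
  show ?case
  proof (cases "d \<le> i")
    case False
    have "G (Suc i) (j (Suc i)) (a * s (Suc i) + b) = G' (Suc i) (j' (Suc i)) (a * s (Suc i) + b)"
      if "b < s (Suc i)" for b
      using False "1.prems" mixed_radix_less[OF \<open>a < s i\<close> that] by auto
    moreover have "right_contr d s G j (Suc i) b = right_contr d s G' j' (Suc i) b"
      if "b < s (Suc i)" for b
      using False "1.prems" that by (intro "1.IH") auto
    ultimately show ?thesis using False by (simp add: right_contr_step)
  qed (simp add: right_contr_end)
qed

lemma left_right_contr_split:
  assumes "s d = 1" and "i \<le> d"
  shows "(\<Sum>b<s i. left_contr s G j i b * right_contr d s G j i b) = left_contr s G j d 0"
  using assms(2)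
proof (induction "d - i" arbitrary: i)
  case 0
  then show ?case using assms(1) by (simp add: right_contr_end)
next
  case (Suc k)
  let ?G = "\<lambda>b c. G (Suc i) (j (Suc i)) (b * s (Suc i) + c)"
  have "(\<Sum>b<s i. left_contr s G j i b * right_contr d s G j i b)
      = (\<Sum>b<s i. \<Sum>c<s (Suc i). left_contr s G j i b * ?G b c * right_contr d s G j (Suc i) c)"
    using Suc.hyps(2) by (simp add: right_contr_step sum_distrib_left mult.assoc)
  also have "\<dots> = (\<Sum>c<s (Suc i). left_contr s G j (Suc i) c * right_contr d s G j (Suc i) c)"
    by (subst sum.swap) (simp add: sum_distrib_right)
  also have "\<dots> = left_contr s G j d 0"
    using Suc.hyps Suc.prems by (intro Suc.hyps(1)) auto
  finally show ?case .
qed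

lemma left_contr_delta_cores:
  assumes "\<forall>l\<in>{1..i}. j l = \<alpha> (l - 1) * s l + \<alpha> l" and "\<forall>l\<le>i. \<alpha> l < s l" and "\<alpha> 0 = 0"
    and "b < s i"
  shows "left_contr s delta_cores j i b = (if b = \<alpha> i then 1 else 0)"
  using assms
proof (induction i arbitrary: b)
  case (Suc i)
  have "left_contr s delta_cores j i a = (if a = \<alpha> i then 1 else 0)" if "a < s i" for a
    using Suc that by simp
  then have "left_contr s delta_cores j (Suc i) b
      = (\<Sum>a<s i. (if a = \<alpha> i then 1 else 0) * delta_cores (Suc i) (j (Suc i)) (a * s (Suc i) + b))"
    by (auto intro: sum.cong)
  also have "\<dots> = delta_cores (Suc i) (j (Suc i)) (\<alpha> i * s (Suc i) + b)"
    using Suc.prems by (intro sum_delta_mult) auto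
  also have "\<dots> = (if b = \<alpha> (Suc i) then 1 else 0)"
    using Suc.prems mixed_radix_eq_iff[of "\<alpha> (Suc i)" "s (Suc i)" b] by (auto simp: delta_cores_def)
  finally show ?case .
qed simp

lemma right_contr_delta_cores:
  assumes "s d = 1" and "i \<le> d" and "\<forall>l\<in>{i<..d}. j l = \<alpha> (l - 1) * s l + \<alpha> l"
    and "\<forall>l\<in>{i..d}. \<alpha> l < s l" and "a < s i"
  shows "right_contr d s delta_cores j i a = (if a = \<alpha> i then 1 else 0)"
  using assms(2-)
proof (induction "d - i" arbitrary: i a)
  case 0
  then show ?case using assms(1) by (simp add: right_contr_end)
next
  case (Suc k)
  have "right_contr d s delta_cores j (Suc i) b = (if b = \<alpha> (Suc i) then 1 else 0)"
    if "b < s (Suc i)" for b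
    using Suc that by (intro Suc.hyps(1)) auto
  then have "right_contr d s delta_cores j i a
      = (\<Sum>b<s (Suc i). (if b = \<alpha> (Suc i) then 1 else 0) * delta_cores (Suc i) (j (Suc i)) (a * s (Suc i) + b))"
    using Suc.hyps(2) by (auto simp: right_contr_step mult.commute intro!: sum.cong)
  also have "\<dots> = delta_cores (Suc i) (j (Suc i)) (a * s (Suc i) + \<alpha> (Suc i))"
    using Suc by (intro sum_delta_mult) auto
  also have "\<dots> = (if a = \<alpha> i then 1 else 0)"
    using Suc mixed_radix_eq_iff[of "\<alpha> (Suc i)" "s (Suc i)" "\<alpha> (Suc i)"]
    by (auto simp: delta_cores_def)
  finally show ?case .
qed

lemma sum_multi_idx_left_contr:
  assumes "s 0 = 1"
  shows "(\<Sum>\<alpha>\<in>multi_idx m s. (\<Prod>l\<in>{1..m}. G l (j l) (\<alpha> (l - 1) * s l + \<alpha> l)) * F (\<alpha> m))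
       = (\<Sum>b<s m. left_contr s G j m b * F b)"
proof (induction m arbitrary: F)
  case 0
  then show ?case using assms by (simp add: multi_idx_0)
next
  case (Suc m)
  let ?P = "\<lambda>\<alpha>. \<Prod>l\<in>{1..m}. G l (j l) (\<alpha> (l - 1) * s l + \<alpha> l)"
  let ?G = "\<lambda>a x. G (Suc m) (j (Suc m)) (a * s (Suc m) + x)"
  have "\<And>\<alpha> x. (\<Prod>l\<in>{1..m}. G l (j l) ((\<alpha>(Suc m := x)) (l - 1) * s l + (\<alpha>(Suc m := x)) l)) = ?P \<alpha>"
    by (intro prod.cong) auto
  then have "(\<Sum>\<alpha>\<in>multi_idx (Suc m) s. (\<Prod>l\<in>{1..Suc m}. G l (j l) (\<alpha> (l - 1) * s l + \<alpha> l)) * F (\<alpha> (Suc m)))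
      = (\<Sum>\<alpha>\<in>multi_idx m s. ?P \<alpha> * (\<Sum>x<s (Suc m). ?G (\<alpha> m) x * F x))"
    by (simp add: sum_multi_idx_Suc sum_distrib_left mult.assoc)
  also have "\<dots> = (\<Sum>a<s m. left_contr s G j m a * (\<Sum>x<s (Suc m). ?G a x * F x))"
    by (rule Suc.IH)
  also have "\<dots> = (\<Sum>a<s m. \<Sum>x<s (Suc m). left_contr s G j m a * ?G a x * F x)"
    by (simp add: sum_distrib_left mult.assoc)
  also have "\<dots> = (\<Sum>x<s (Suc m). left_contr s G j (Suc m) x * F x)"
    by (subst sum.swap) (simp add: sum_distrib_right)
  finally show ?case .
qed

locale mps_format =
  fixes d :: nat and n s :: "nat \<Rightarrow> nat"
  assumes two_le_d: "2 \<le> d"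
    and bond_pos: "\<forall>i\<in>{1..d-1}. 1 \<le> s i"
    and bond_0: "s 0 = 1" and bond_d: "s d = 1"
    and bond_le_dim: "\<forall>i\<in>{1..d}. s (i - 1) * s i \<le> n i"
begin

lemma bond_gt_0: "i \<le> d \<Longrightarrow> 0 < s i"
proof (cases "i = 0 \<or> i = d")
  case False
  assume "i \<le> d"
  with False have "i \<in> {1..d-1}" by auto
  then show ?thesis using bond_pos by fastforce
qed (use bond_0 bond_d in auto)

lemma bond_le_bond_product:
  assumes "i \<in> {1..d}"
  shows "s i \<le> s (i - 1) * s i"
proof -
  have "0 < s (i - 1)" using assms by (intro bond_gt_0) auto
  then show ?thesis by simp
qed

lemma bond_le_dim_right: "i \<in> {1..d} \<Longrightarrow> s i \<le> n i"
  using bond_le_bond_product bond_le_dim le_trans by blast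

lemma mixed_radix_less_dim: "a < s (i - 1) \<Longrightarrow> b < s i \<Longrightarrow> i \<in> {1..d} \<Longrightarrow> a * s i + b < n i"
  using mixed_radix_less[of a "s (i - 1)" b "s i"] bond_le_dim by (meson order_less_le_trans)

lemma alphas_eq_multi_idx: "alphas d s = multi_idx (d - 1) s"
  unfolding alphas_def multi_idx_def ..

lemma T_index_eq: "\<alpha> \<in> alphas d s \<Longrightarrow> i \<in> {1..d} \<Longrightarrow> T_index d s \<alpha> i = \<alpha> (i - 1) * s i + \<alpha> i"
  using two_le_d bond_d unfolding alphas_def T_index_def iota_def by auto

lemma alphas_less_bond: "\<alpha> \<in> alphas d s \<Longrightarrow> i \<le> d \<Longrightarrow> \<alpha> i < s i"
  using bond_0 bond_d unfolding alphas_def by (cases "i = 0 \<or> i = d") auto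

lemma T_index_less_dim: "\<alpha> \<in> alphas d s \<Longrightarrow> i \<in> {1..d} \<Longrightarrow> T_index d s \<alpha> i < n i"
  by (auto simp: T_index_eq alphas_less_bond intro!: mixed_radix_less_dim)

lemma sum_alphas_T_index:
  "(\<Sum>\<alpha>\<in>alphas d s. \<Prod>i\<in>{1..d}. G i (j i) (T_index d s \<alpha> i)) = left_contr s G j d 0"
proof -
  obtain d' where d': "d = Suc d'" using two_le_d by (cases d) auto
  have "(\<Prod>i\<in>{1..d}. G i (j i) (T_index d s \<alpha> i))
      = (\<Prod>l\<in>{1..d-1}. G l (j l) (\<alpha> (l - 1) * s l + \<alpha> l)) * G d (j d) (\<alpha> (d - 1))"
    if "\<alpha> \<in> alphas d s" for \<alpha>
  proof -
    have "(\<Prod>i\<in>{1..d}. G i (j i) (T_index d s \<alpha> i))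
        = (\<Prod>i\<in>{1..d-1}. G i (j i) (T_index d s \<alpha> i)) * G d (j d) (T_index d s \<alpha> d)"
      using two_le_d by (cases d) auto
    also have "(\<Prod>i\<in>{1..d-1}. G i (j i) (T_index d s \<alpha> i))
        = (\<Prod>l\<in>{1..d-1}. G l (j l) (\<alpha> (l - 1) * s l + \<alpha> l))"
      using that by (intro prod.cong) (auto simp: T_index_eq)
    also have "T_index d s \<alpha> d = \<alpha> (d - 1)"
      using two_le_d by (simp add: T_index_def)
    finally show ?thesis .
  qed
  then have "(\<Sum>\<alpha>\<in>alphas d s. \<Prod>i\<in>{1..d}. G i (j i) (T_index d s \<alpha> i))
      = (\<Sum>\<alpha>\<in>multi_idx (d - 1) s. (\<Prod>l\<in>{1..d-1}. G l (j l) (\<alpha> (l - 1) * s l + \<alpha> l)) * G d (j d) (\<alpha> (d - 1)))"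
    unfolding alphas_eq_multi_idx by (rule sum.cong[OF refl])
  also have "\<dots> = (\<Sum>b<s (d - 1). left_contr s G j (d - 1) b * G d (j d) b)"
    by (rule sum_multi_idx_left_contr) (rule bond_0)
  also have "\<dots> = left_contr s G j d 0"
    using bond_d by (simp add: d')
  finally show ?thesis .
qed

lemma T_tensor_eq_left_contr: "T_tensor d s j = left_contr s delta_cores j d 0"
  unfolding T_tensor_def sum_alphas_T_index[symmetric] delta_cores_def
  by (intro sum.cong prod.cong refl)

lemma act_T_tensor_eq_left_contr: "act d n g (T_tensor d s) j = left_contr s (mat_cores g) j d 0"
proof -
  have "act d n g (T_tensor d s) j
     = (\<Sum>\<alpha>\<in>alphas d s. \<Sum>k\<in>multi_idx d n. \<Prod>i\<in>{1..d}. g i $$ (j i, k i) * (if k i = T_index d s \<alpha> i then 1 else 0))"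
    unfolding act_def T_tensor_def
    by (subst sum.swap) (simp add: sum_distrib_left prod.distrib)
  also have "\<dots> = (\<Sum>\<alpha>\<in>alphas d s. \<Prod>i\<in>{1..d}. \<Sum>x<n i. g i $$ (j i, x) * (if x = T_index d s \<alpha> i then 1 else 0))"
    by (intro sum.cong refl)
      (rule sum_prod_multi_idx[of "\<lambda>i x. g i $$ (j i, x) * (if x = T_index d s _ i then 1 else 0)"])
  also have "\<dots> = (\<Sum>\<alpha>\<in>alphas d s. \<Prod>i\<in>{1..d}. mat_cores g i (j i) (T_index d s \<alpha> i))"
  proof (intro sum.cong prod.cong refl)
    fix \<alpha> i assume "\<alpha> \<in> alphas d s" "i \<in> {1..d}"
    then have "T_index d s \<alpha> i < n i" by (rule T_index_less_dim)
    then show "(\<Sum>x<n i. g i $$ (j i, x) * (if x = T_index d s \<alpha> i then 1 else 0))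
        = mat_cores g i (j i) (T_index d s \<alpha> i)"
      by (simp add: mat_cores_def if_distrib cong: if_cong)
  qed
  finally show ?thesis by (simp only: sum_alphas_T_index)
qed

lemma act_T_tensor_split:
  "i \<le> d \<Longrightarrow> act d n g (T_tensor d s) j
     = (\<Sum>b<s i. left_contr s (mat_cores g) j i b * right_contr d s (mat_cores g) j i b)"
  by (simp add: act_T_tensor_eq_left_contr left_right_contr_split[where s = s and d = d, OF bond_d])

lemma mat_cores_one:
  assumes "k \<in> multi_idx d n" and "l \<in> {1..d}" and "q < s (l - 1) * s l"
  shows "mat_cores (\<lambda>l. 1\<^sub>m (n l)) l (k l) q = delta_cores l (k l) q"
proof -
  have "k l < n l" using assms unfolding multi_idx_def by auto
  moreover have "q < n l" using assms bond_le_dim by (meson order_less_le_trans)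
  ultimately show ?thesis by (simp add: mat_cores_def delta_cores_def)
qed

lemma act_T_tensor_prefix:
  assumes "i \<le> d" and "k \<in> multi_idx d n"
  shows "act d n (\<lambda>l. if l \<le> i then g l else 1\<^sub>m (n l)) (T_tensor d s) k
       = (\<Sum>b<s i. left_contr s (mat_cores g) k i b * right_contr d s delta_cores k i b)"
  unfolding act_T_tensor_split[OF assms(1)]
proof (intro sum.cong refl arg_cong2[where f = "(*)"])
  fix b assume "b \<in> {..<s i}"
  then show "left_contr s (mat_cores (\<lambda>l. if l \<le> i then g l else 1\<^sub>m (n l))) k i b
      = left_contr s (mat_cores g) k i b"
    by (intro left_contr_cong) (auto simp: mat_cores_def)
  show "right_contr d s (mat_cores (\<lambda>l. if l \<le> i then g l else 1\<^sub>m (n l))) k i b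
      = right_contr d s delta_cores k i b"
    using \<open>b \<in> {..<s i}\<close> mat_cores_one[OF assms(2)] by (intro right_contr_cong) (auto simp: mat_cores_def)
qed

lemma act_T_tensor_suffix:
  assumes "i \<le> d" and "k \<in> multi_idx d n"
  shows "act d n (\<lambda>l. if l \<le> i then 1\<^sub>m (n l) else h l) (T_tensor d s) k
       = (\<Sum>b<s i. left_contr s delta_cores k i b * right_contr d s (mat_cores h) k i b)"
  unfolding act_T_tensor_split[OF assms(1)]
proof (intro sum.cong refl arg_cong2[where f = "(*)"])
  fix b assume "b \<in> {..<s i}"
  then show "left_contr s (mat_cores (\<lambda>l. if l \<le> i then 1\<^sub>m (n l) else h l)) k i b
      = left_contr s delta_cores k i b"
    using mat_cores_one[OF assms(2)] assms(1) by (intro left_contr_cong) (auto simp: mat_cores_def)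
  show "right_contr d s (mat_cores (\<lambda>l. if l \<le> i then 1\<^sub>m (n l) else h l)) k i b
      = right_contr d s (mat_cores h) k i b"
    using \<open>b \<in> {..<s i}\<close> by (intro right_contr_cong) (auto simp: mat_cores_def)
qed

text \<open>Cutting \<open>g \<cdot> T = T\<close> between factors \<open>i\<close> and \<open>i + 1\<close>: moving \<open>g\<^sub>i\<^sub>+\<^sub>1, \<dots>, g\<^sub>d\<close> to the
  other side gives \<open>(g\<^sub>1, \<dots>, g\<^sub>i, 1, \<dots>, 1) \<cdot> T = (1, \<dots>, 1, g\<^sub>i\<^sub>+\<^sub>1\<^sup>-\<^sup>1, \<dots>, g\<^sub>d\<^sup>-\<^sup>1) \<cdot> T\<close>.\<close>

lemma stabilizer_cut:
  assumes gG: "in_G d n g" and stab: "\<forall>j\<in>multi_idx d n. act d n g (T_tensor d s) j = T_tensor d s j"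
    and i: "i \<le> d" and k: "k \<in> multi_idx d n"
  shows "(\<Sum>b<s i. left_contr s (mat_cores g) k i b * right_contr d s delta_cores k i b)
       = (\<Sum>b<s i. left_contr s delta_cores k i b * right_contr d s (mat_cores (\<lambda>l. minv (g l))) k i b)"
proof -
  define hr where "hr = (\<lambda>l. if l \<le> i then 1\<^sub>m (n l) else minv (g l))"
  have g: "g l \<in> carrier_mat (n l) (n l)" "invertible_mat (g l)" if "l \<in> {1..d}" for l
    using gG that unfolding in_G_def by auto
  have "act d n hr (T_tensor d s) k = act d n hr (act d n g (T_tensor d s)) k"
    using stab by (intro act_cong_tensor) auto
  also have "\<dots> = act d n (\<lambda>l. hr l * g l) (T_tensor d s) k"
    using g minv_inverse(1) k unfolding hr_def by (intro act_mult) auto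
  also have "\<dots> = act d n (\<lambda>l. if l \<le> i then g l else 1\<^sub>m (n l)) (T_tensor d s) k"
  proof (intro fun_cong[OF act_cong] ballI)
    fix l assume "l \<in> {1..d}"
    then have "g l \<in> carrier_mat (n l) (n l)" "invertible_mat (g l)" by (rule g)+
    then show "hr l * g l = (if l \<le> i then g l else 1\<^sub>m (n l))"
      using minv_inverse(3) by (simp add: hr_def left_mult_one_mat)
  qed
  finally show ?thesis
    unfolding act_T_tensor_prefix[OF i k] hr_def act_T_tensor_suffix[OF i k] ..
qed

section \<open>Gauge relations for the stabilizer\<close>

text \<open>Write \<open>L\<^sub>i(k)\<close> for the left contraction of \<open>T\<close> and \<open>L\<^sub>i\<^sup>g(k)\<close> for that of \<open>g \<cdot> T\<close>, whose
  cores are the leading columns of the \<open>g\<^sub>l\<close>.  Then \<open>left_gauge g i A\<close> says \<open>L\<^sub>i\<^sup>g(k) = L\<^sub>i(k) A\<close>,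
  \<open>core_gauge g i A' A\<close> says that the \<open>i\<close>-th cores are related by \<open>A' G\<^sub>i\<^sup>g[p] = G\<^sub>i[p] A\<close>, and
  \<open>core_kron_form g i A' A\<close> says that the leading columns of \<open>g\<^sub>i\<close> are \<open>[A'\<^sup>-\<^sup>T \<otimes> A; 0]\<close>.\<close>

definition left_gauge :: "(nat \<Rightarrow> real mat) \<Rightarrow> nat \<Rightarrow> real mat \<Rightarrow> bool" where
  "left_gauge g i A \<longleftrightarrow> (\<forall>k\<in>multi_idx d n. \<forall>b<s i.
     left_contr s (mat_cores g) k i b = (\<Sum>b'<s i. left_contr s delta_cores k i b' * A $$ (b', b)))"

definition core_gauge :: "(nat \<Rightarrow> real mat) \<Rightarrow> nat \<Rightarrow> real mat \<Rightarrow> real mat \<Rightarrow> bool" where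
  "core_gauge g i A' A \<longleftrightarrow> (\<forall>p<n i. \<forall>a'<s (i - 1). \<forall>b<s i.
     (\<Sum>a<s (i - 1). A' $$ (a', a) * g i $$ (p, a * s i + b))
       = (if p div s i = a' then A $$ (p mod s i, b) else 0))"

definition core_kron_form :: "(nat \<Rightarrow> real mat) \<Rightarrow> nat \<Rightarrow> real mat \<Rightarrow> real mat \<Rightarrow> bool" where
  "core_kron_form g i A' A \<longleftrightarrow> (\<forall>p<n i. \<forall>q<s (i - 1) * s i. g i $$ (p, q) =
     (if p < s (i - 1) * s i then minv A' $$ (q div s i, p div s i) * A $$ (p mod s i, q mod s i) else 0))"

lemma left_gauge_0: "left_gauge g 0 (1\<^sub>m 1)"
  unfolding left_gauge_def using bond_0 by simp

lemma left_gauge_last_iff: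
  "left_gauge g d (1\<^sub>m 1) \<longleftrightarrow> (\<forall>j\<in>multi_idx d n. act d n g (T_tensor d s) j = T_tensor d s j)"
  unfolding left_gauge_def using bond_d by (simp add: act_T_tensor_eq_left_contr T_tensor_eq_left_contr)

lemma left_contr_mat_cores_via_gauge:
  assumes "left_gauge g (i - 1) A'" and "i \<in> {1..d}" and "k \<in> multi_idx d n" and "b < s i"
  shows "left_contr s (mat_cores g) k i b = (\<Sum>a'<s (i - 1). left_contr s delta_cores k (i - 1) a'
           * (\<Sum>a<s (i - 1). A' $$ (a', a) * g i $$ (k i, a * s i + b)))"
proof -
  obtain i0 where i: "i = Suc i0" using assms(2) by (cases i) auto
  have "left_contr s (mat_cores g) k i b
      = (\<Sum>a<s i0. (\<Sum>a'<s i0. left_contr s delta_cores k i0 a' * A' $$ (a', a)) * g i $$ (k i, a * s i + b))"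
    using assms unfolding left_gauge_def i by (simp add: mat_cores_def)
  also have "\<dots> = (\<Sum>a<s i0. \<Sum>a'<s i0. left_contr s delta_cores k i0 a' * (A' $$ (a', a) * g i $$ (k i, a * s i + b)))"
    by (simp add: sum_distrib_right mult.assoc)
  also have "\<dots> = (\<Sum>a'<s i0. left_contr s delta_cores k i0 a' * (\<Sum>a<s i0. A' $$ (a', a) * g i $$ (k i, a * s i + b)))"
    by (subst sum.swap) (simp add: sum_distrib_left)
  finally show ?thesis unfolding i by simp
qed

lemma sum_left_contr_delta_cores:
  assumes "i \<in> {1..d}"
  shows "(\<Sum>b'<s i. left_contr s delta_cores k i b' * A $$ (b', b))
       = (\<Sum>a'<s (i - 1). left_contr s delta_cores k (i - 1) a'
           * (if k i div s i = a' then A $$ (k i mod s i, b) else 0))"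
proof -
  obtain i0 where i: "i = Suc i0" using assms by (cases i) auto
  have "(\<Sum>b'<s i. left_contr s delta_cores k i b' * A $$ (b', b))
      = (\<Sum>b'<s i. \<Sum>a'<s i0. left_contr s delta_cores k i0 a' * ((if k i = a' * s i + b' then 1 else 0) * A $$ (b', b)))"
    unfolding i by (simp add: delta_cores_def sum_distrib_right mult.assoc)
  also have "\<dots> = (\<Sum>a'<s i0. left_contr s delta_cores k i0 a'
      * (\<Sum>b'<s i. (if k i = a' * s i + b' then 1 else 0) * A $$ (b', b)))"
    by (subst sum.swap) (simp add: sum_distrib_left)
  also have "\<dots> = (\<Sum>a'<s i0. left_contr s delta_cores k i0 a'
      * (if k i div s i = a' then A $$ (k i mod s i, b) else 0))"
    using bond_gt_0 assms by (intro sum.cong refl arg_cong2[where f = "(*)"] sum_mixed_radix_delta) auto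
  finally show ?thesis unfolding i by simp
qed

lemma left_gauge_step:
  assumes i: "i \<in> {1..d}" and "left_gauge g (i - 1) A'" and "core_gauge g i A' A"
  shows "left_gauge g i A"
  unfolding left_gauge_def
proof (intro ballI allI impI)
  fix k b assume k: "k \<in> multi_idx d n" and b: "b < s i"
  have "k i < n i" using k i unfolding multi_idx_def by auto
  then show "left_contr s (mat_cores g) k i b = (\<Sum>b'<s i. left_contr s delta_cores k i b' * A $$ (b', b))"
    using assms(3) b unfolding left_contr_mat_cores_via_gauge[OF assms(2) i k b]
      sum_left_contr_delta_cores[OF i] core_gauge_def
    by (intro sum.cong refl arg_cong2[where f = "(*)"]) auto
qed

lemma exists_multi_idx_left_delta:
  assumes i: "i \<in> {1..d}" and p: "p < n i" and a': "a' < s (i - 1)"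
  obtains k where "k \<in> multi_idx d n" and "k i = p"
    and "\<And>a. a < s (i - 1) \<Longrightarrow> left_contr s delta_cores k (i - 1) a = (if a = a' then 1 else 0)"
proof -
  define \<alpha> where "\<alpha> = (\<lambda>l. if l = i - 1 then a' else (0::nat))"
  define k where "k = (\<lambda>l. if l = i then p else \<alpha> l)"
  have \<alpha>0: "\<alpha> 0 = 0" using a' bond_0 unfolding \<alpha>_def by auto
  have \<alpha>_less: "\<forall>l\<le>i - 1. \<alpha> l < s l" using a' i bond_gt_0 unfolding \<alpha>_def by auto
  have "k \<in> multi_idx d n"
    unfolding multi_idx_def
  proof (intro CollectI conjI ballI allI impI)
    fix l assume l: "l \<in> {1..d}"
    have "0 * s l + \<alpha> l < n l"
      using l a' bond_gt_0 unfolding \<alpha>_def by (intro mixed_radix_less_dim) auto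
    then show "k l < n l" using p unfolding k_def by auto
  next
    fix l assume "l \<notin> {1..d}"
    then show "k l = 0" using i \<alpha>0 unfolding k_def by (cases "l = 0") (auto simp: \<alpha>_def)
  qed
  moreover have "\<forall>l\<in>{1..i - 1}. k l = \<alpha> (l - 1) * s l + \<alpha> l"
    unfolding k_def \<alpha>_def by auto
  then have "left_contr s delta_cores k (i - 1) a = (if a = a' then 1 else 0)" if "a < s (i - 1)" for a
    using left_contr_delta_cores[of "i - 1" k \<alpha> s a] \<alpha>0 \<alpha>_less that unfolding \<alpha>_def by auto
  moreover have "k i = p" unfolding k_def by simp
  ultimately show thesis using that by blast
qed

lemma core_gauge_of_left_gauge:
  assumes i: "i \<in> {1..d}" and "left_gauge g (i - 1) A'" and "left_gauge g i A"
  shows "core_gauge g i A' A"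
  unfolding core_gauge_def
proof (intro allI impI)
  fix p a' b assume p: "p < n i" and a': "a' < s (i - 1)" and b: "b < s i"
  obtain k where k: "k \<in> multi_idx d n" "k i = p"
    and e: "\<And>a. a < s (i - 1) \<Longrightarrow> left_contr s delta_cores k (i - 1) a = (if a = a' then 1 else 0)"
    using exists_multi_idx_left_delta[OF i p a'] by blast
  have pick: "(\<Sum>a<s (i - 1). left_contr s delta_cores k (i - 1) a * X a) = X a'" for X
  proof -
    have "(\<Sum>a<s (i - 1). left_contr s delta_cores k (i - 1) a * X a)
        = (\<Sum>a<s (i - 1). (if a = a' then 1 else 0) * X a)"
      using e by (intro sum.cong) auto
    also have "\<dots> = X a'" using a' by (rule sum_delta_mult)
    finally show ?thesis .
  qed
  have "left_contr s (mat_cores g) k i b = (\<Sum>a<s (i - 1). A' $$ (a', a) * g i $$ (p, a * s i + b))"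
    unfolding left_contr_mat_cores_via_gauge[OF assms(2) i k(1) b] pick k(2) ..
  moreover have "left_contr s (mat_cores g) k i b = (\<Sum>b'<s i. left_contr s delta_cores k i b' * A $$ (b', b))"
    using assms(3) k(1) b unfolding left_gauge_def by blast
  then have "left_contr s (mat_cores g) k i b = (if p div s i = a' then A $$ (p mod s i, b) else 0)"
    unfolding sum_left_contr_delta_cores[OF i] pick k(2) .
  ultimately show "(\<Sum>a<s (i - 1). A' $$ (a', a) * g i $$ (p, a * s i + b))
      = (if p div s i = a' then A $$ (p mod s i, b) else 0)"
    by simp
qed

lemma core_kron_form_of_core_gauge:
  assumes i: "i \<in> {1..d}" and A': "A' \<in> carrier_mat (s (i - 1)) (s (i - 1))" "invertible_mat A'"
    and gauge: "core_gauge g i A' A"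
  shows "core_kron_form g i A' A"
  unfolding core_kron_form_def
proof (intro allI impI)
  fix p q assume p: "p < n i" and q: "q < s (i - 1) * s i"
  define a0 where "a0 = q div s i"
  define b where "b = q mod s i"
  have a0: "a0 < s (i - 1)" and b: "b < s i"
    using q bond_gt_0 i unfolding a0_def b_def by (auto intro: less_mult_imp_div_less)
  have "q = a0 * s i + b" unfolding a0_def b_def by (rule div_mult_mod_eq[symmetric])
  then have "g i $$ (p, q) = (\<Sum>a<s (i - 1). (if a = a0 then 1 else 0) * g i $$ (p, a * s i + b))"
    using sum_delta_mult[OF a0, of "\<lambda>a. g i $$ (p, a * s i + b)"] by simp
  also have "\<dots> = (\<Sum>a<s (i - 1). (\<Sum>a'<s (i - 1). minv A' $$ (a0, a') * A' $$ (a', a)) * g i $$ (p, a * s i + b))"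
    using sum_minv_mult_entry[OF A' a0] by (intro sum.cong refl) auto
  also have "\<dots> = (\<Sum>a<s (i - 1). \<Sum>a'<s (i - 1). minv A' $$ (a0, a') * (A' $$ (a', a) * g i $$ (p, a * s i + b)))"
    by (simp add: sum_distrib_right mult.assoc)
  also have "\<dots> = (\<Sum>a'<s (i - 1). minv A' $$ (a0, a') * (\<Sum>a<s (i - 1). A' $$ (a', a) * g i $$ (p, a * s i + b)))"
    by (subst sum.swap) (simp add: sum_distrib_left)
  also have "\<dots> = (\<Sum>a'<s (i - 1). minv A' $$ (a0, a') * (if p div s i = a' then A $$ (p mod s i, b) else 0))"
    using gauge p b unfolding core_gauge_def by (intro sum.cong refl) auto
  also have "\<dots> = (if p div s i < s (i - 1) then minv A' $$ (a0, p div s i) * A $$ (p mod s i, b) else 0)"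
    by (simp add: if_distrib[of "\<lambda>x. _ * x"] cong: if_cong)
  also have "p div s i < s (i - 1) \<longleftrightarrow> p < s (i - 1) * s i"
    using bond_gt_0 i by (intro div_less_iff_less_mult) auto
  finally show "g i $$ (p, q) = (if p < s (i - 1) * s i
      then minv A' $$ (q div s i, p div s i) * A $$ (p mod s i, q mod s i) else 0)"
    unfolding a0_def b_def .
qed

lemma core_gauge_of_core_kron_form:
  assumes i: "i \<in> {1..d}" and A': "A' \<in> carrier_mat (s (i - 1)) (s (i - 1))" "invertible_mat A'"
    and kron: "core_kron_form g i A' A"
  shows "core_gauge g i A' A"
  unfolding core_gauge_def
proof (intro allI impI)
  fix p a' b assume p: "p < n i" and a': "a' < s (i - 1)" and b: "b < s i"
  have g: "g i $$ (p, a * s i + b) =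
      (if p < s (i - 1) * s i then minv A' $$ (a, p div s i) * A $$ (p mod s i, b) else 0)"
    if "a < s (i - 1)" for a
    using kron p b mixed_radix_less[OF that b] unfolding core_kron_form_def by auto
  show "(\<Sum>a<s (i - 1). A' $$ (a', a) * g i $$ (p, a * s i + b))
      = (if p div s i = a' then A $$ (p mod s i, b) else 0)"
  proof (cases "p < s (i - 1) * s i")
    case True
    then have pd: "p div s i < s (i - 1)" by (rule less_mult_imp_div_less)
    have "(\<Sum>a<s (i - 1). A' $$ (a', a) * g i $$ (p, a * s i + b))
        = (\<Sum>a<s (i - 1). A' $$ (a', a) * minv A' $$ (a, p div s i)) * A $$ (p mod s i, b)"
      using True g by (simp add: sum_distrib_right mult.assoc)
    then show ?thesis using sum_mult_minv_entry[OF A' a' pd] by auto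
  next
    case False
    have "0 < s i" using bond_gt_0 i by auto
    then have "p div s i \<noteq> a'"
      using False a' div_less_iff_less_mult[of "s i" p "s (i - 1)"] by auto
    then show ?thesis using False g by simp
  qed
qed

text \<open>The padded vector is \<open>e\<^sub>0 \<otimes> v\<close>, and \<open>(A'\<^sup>-\<^sup>T \<otimes> A) (e\<^sub>0 \<otimes> v) = A'\<^sup>-\<^sup>T e\<^sub>0 \<otimes> A v\<close>.\<close>

lemma core_kron_form_mult_padded_vec:
  assumes i: "i \<in> {1..d}" and g: "g i \<in> carrier_mat (n i) (n i)"
    and A: "A \<in> carrier_mat (s i) (s i)" and kron: "core_kron_form g i A' A"
    and v: "v \<in> carrier_vec (s i)" "A *\<^sub>v v = 0\<^sub>v (s i)"
  shows "g i *\<^sub>v vec (n i) (\<lambda>q. if q < s i then v $ q else 0) = 0\<^sub>v (n i)"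
proof (rule eq_vecI)
  fix p assume "p < dim_vec (0\<^sub>v (n i))"
  then have p: "p < n i" by simp
  have "(g i *\<^sub>v vec (n i) (\<lambda>q. if q < s i then v $ q else 0)) $ p
      = (\<Sum>q<n i. g i $$ (p, q) * (if q < s i then v $ q else 0))"
    using index_mult_mat_vec_sum[OF g _ p] by simp
  also have "\<dots> = (\<Sum>q<s i. g i $$ (p, q) * v $ q)"
    using bond_le_dim_right[OF i] by (intro sum.mono_neutral_cong_right) auto
  also have "\<dots> = (\<Sum>q<s i. (if p < s (i - 1) * s i
      then minv A' $$ (0, p div s i) * A $$ (p mod s i, q) else 0) * v $ q)"
  proof (intro sum.cong refl arg_cong2[where f = "(*)"])
    fix q assume "q \<in> {..<s i}"
    then have "q < s i" "q < s (i - 1) * s i" using bond_le_bond_product[OF i] by (auto intro: less_le_trans)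
    then show "g i $$ (p, q) = (if p < s (i - 1) * s i
        then minv A' $$ (0, p div s i) * A $$ (p mod s i, q) else 0)"
      using kron p unfolding core_kron_form_def by simp
  qed
  also have "\<dots> = (if p < s (i - 1) * s i
      then minv A' $$ (0, p div s i) * (\<Sum>q<s i. A $$ (p mod s i, q) * v $ q) else 0)"
    by (simp add: sum_distrib_left mult.assoc)
  also have "\<dots> = 0"
    using v index_mult_mat_vec_sum[OF A v(1), of "p mod s i"] bond_gt_0 i
    by (auto dest: arg_cong[where f = "\<lambda>w. w $ (p mod s i)"])
  finally show "(g i *\<^sub>v vec (n i) (\<lambda>q. if q < s i then v $ q else 0)) $ p = 0\<^sub>v (n i) $ p"
    using p by simp
qed (use g in simp)

lemma invertible_of_core_kron_form:
  assumes i: "i \<in> {1..d}" and g: "g i \<in> carrier_mat (n i) (n i)" "invertible_mat (g i)"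
    and A: "A \<in> carrier_mat (s i) (s i)" and kron: "core_kron_form g i A' A"
  shows "invertible_mat A"
proof (rule ccontr)
  assume "\<not> invertible_mat A"
  then obtain v where v: "v \<in> carrier_vec (s i)" "v \<noteq> 0\<^sub>v (s i)" "A *\<^sub>v v = 0\<^sub>v (s i)"
    using invertible_mat_iff_det[OF A] det_0_iff_vec_prod_zero[OF A] by auto
  define z where "z = vec (n i) (\<lambda>q. if q < s i then v $ q else 0)"
  have "z \<in> carrier_vec (n i)" "z \<noteq> 0\<^sub>v (n i)" "g i *\<^sub>v z = 0\<^sub>v (n i)"
    unfolding z_def using vec_padded_nonzero[OF v(1,2) bond_le_dim_right[OF i]]
      core_kron_form_mult_padded_vec[OF i g(1) A kron v(1,3)] by simp_all
  then have "det (g i) = 0"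
    using det_0_iff_vec_prod_zero[OF g(1)] by blast
  then show False using g invertible_mat_iff_det by blast
qed

lemma exists_multi_idx_right_delta:
  assumes i: "i < d" and k0: "k0 \<in> multi_idx d n" and b0: "b0 < s i"
  obtains k where "k \<in> multi_idx d n" and "\<forall>l\<le>i. k l = k0 l"
    and "\<forall>l>i. k l = (if l = Suc i then b0 * s l else 0)"
    and "\<And>b. b < s i \<Longrightarrow> right_contr d s delta_cores k i b = (if b = b0 then 1 else 0)"
proof -
  define \<beta> where "\<beta> = (\<lambda>l. if l = i then b0 else (0::nat))"
  define k where "k = (\<lambda>l. if l \<le> i then k0 l else if l = Suc i then b0 * s l else 0)"
  have \<beta>: "\<forall>l\<le>d. \<beta> l < s l" "\<forall>l\<in>{i<..d}. k l = \<beta> (l - 1) * s l + \<beta> l"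
    using b0 bond_gt_0 unfolding \<beta>_def k_def by auto
  have "k \<in> multi_idx d n"
    unfolding multi_idx_def
  proof (intro CollectI conjI ballI allI impI)
    fix l assume l: "l \<in> {1..d}"
    show "k l < n l"
    proof (cases "l \<le> i")
      case False
      then have "\<beta> (l - 1) * s l + \<beta> l < n l"
        using l \<beta>(1) by (intro mixed_radix_less_dim) auto
      then show ?thesis using False l \<beta>(2) by auto
    qed (use k0 l in \<open>auto simp: k_def multi_idx_def\<close>)
  next
    fix l assume "l \<notin> {1..d}"
    then show "k l = 0" using k0 i unfolding k_def multi_idx_def by auto
  qed
  moreover have "right_contr d s delta_cores k i b = (if b = b0 then 1 else 0)" if "b < s i" for b
    using right_contr_delta_cores[OF bond_d _ \<beta>(2)] \<beta>(1) i that unfolding \<beta>_def by auto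
  ultimately show thesis using that unfolding k_def by auto
qed

text \<open>Fixing the indices right of the cut so that the bond value there is \<open>b\<^sub>0\<close>,
  \<open>stabilizer_cut\<close> expresses column \<open>b\<^sub>0\<close> of \<open>L\<^sub>i\<^sup>g(k)\<close> as \<open>L\<^sub>i(k)\<close> times a vector depending only on
  \<open>g\<^sub>i\<^sub>+\<^sub>1, \<dots>, g\<^sub>d\<close> and \<open>b\<^sub>0\<close>: these vectors are the columns of the gauge matrix.\<close>

lemma left_gauge_exists:
  assumes gG: "in_G d n g" and stab: "\<forall>j\<in>multi_idx d n. act d n g (T_tensor d s) j = T_tensor d s j"
    and i: "i \<in> {1..d-1}"
  obtains A where "A \<in> carrier_mat (s i) (s i)" and "left_gauge g i A"
proof -
  define tail where "tail b0 = (\<lambda>l. if l = Suc i then b0 * s l else (0::nat))" for b0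
  define A where "A = mat (s i) (s i) (\<lambda>(b, b0). right_contr d s (mat_cores (\<lambda>l. minv (g l))) (tail b0) i b)"
  have "left_gauge g i A"
    unfolding left_gauge_def
  proof (intro ballI allI impI)
    fix k0 b0 assume k0: "k0 \<in> multi_idx d n" and b0: "b0 < s i"
    have "i < d" using i by auto
    then obtain k where k: "k \<in> multi_idx d n" "\<forall>l\<le>i. k l = k0 l"
      "\<forall>l>i. k l = (if l = Suc i then b0 * s l else 0)"
      and R: "\<And>b. b < s i \<Longrightarrow> right_contr d s delta_cores k i b = (if b = b0 then 1 else 0)"
      using exists_multi_idx_right_delta k0 b0 by blast
    have "left_contr s (mat_cores g) k0 i b0 = left_contr s (mat_cores g) k i b0"
      using b0 k(2) by (intro left_contr_cong) auto
    also have "\<dots> = (\<Sum>b<s i. (if b = b0 then 1 else 0) * left_contr s (mat_cores g) k i b)"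
      using b0 by (simp add: sum_delta_mult)
    also have "\<dots> = (\<Sum>b<s i. left_contr s (mat_cores g) k i b * right_contr d s delta_cores k i b)"
      using R by (intro sum.cong refl) (simp add: mult.commute)
    also have "\<dots> = (\<Sum>b<s i. left_contr s delta_cores k i b * right_contr d s (mat_cores (\<lambda>l. minv (g l))) k i b)"
      using i by (intro stabilizer_cut[OF gG stab _ k(1)]) auto
    also have "\<dots> = (\<Sum>b<s i. left_contr s delta_cores k0 i b * A $$ (b, b0))"
    proof (intro sum.cong refl arg_cong2[where f = "(*)"])
      fix b assume b: "b \<in> {..<s i}"
      then show "left_contr s delta_cores k i b = left_contr s delta_cores k0 i b"
        using k(2) by (intro left_contr_cong) auto
      show "right_contr d s (mat_cores (\<lambda>l. minv (g l))) k i b = A $$ (b, b0)"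
        using b b0 k(3) unfolding A_def tail_def by (auto intro: right_contr_cong)
    qed
    finally show "left_contr s (mat_cores g) k0 i b0 = (\<Sum>b'<s i. left_contr s delta_cores k0 i b' * A $$ (b', b0))" .
  qed
  moreover have "A \<in> carrier_mat (s i) (s i)" unfolding A_def by simp
  ultimately show thesis using that by blast
qed

definition bond_pad :: "(nat \<Rightarrow> real mat) \<Rightarrow> nat \<Rightarrow> real mat" where
  "bond_pad A i = (if i \<in> {1..d-1} then A i else 1\<^sub>m 1)"

lemma bond_pad_0: "bond_pad A 0 = 1\<^sub>m 1" and bond_pad_d: "bond_pad A d = 1\<^sub>m 1"
  unfolding bond_pad_def by auto

lemma bond_pad_inner: "i \<in> {1..d-1} \<Longrightarrow> bond_pad A i = A i"
  unfolding bond_pad_def by simp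

lemma bond_pad_carrier_mat:
  "\<forall>i\<in>{1..d-1}. A i \<in> carrier_mat (s i) (s i) \<Longrightarrow> i \<le> d \<Longrightarrow> bond_pad A i \<in> carrier_mat (s i) (s i)"
  using bond_0 bond_d unfolding bond_pad_def by (cases "i = 0 \<or> i = d") auto

lemma bond_pad_invertible:
  "\<forall>i\<in>{1..d-1}. invertible_mat (A i) \<Longrightarrow> invertible_mat (bond_pad A i)"
  unfolding bond_pad_def using invertible_one_mat by auto

lemma diag_block_entry:
  assumes A: "\<forall>i\<in>{1..d-1}. A i \<in> carrier_mat (s i) (s i) \<and> invertible_mat (A i)" and i: "i \<in> {1..d}"
  shows "diag_block d A i \<in> carrier_mat (s (i - 1) * s i) (s (i - 1) * s i)"
    and "p < s (i - 1) * s i \<Longrightarrow> q < s (i - 1) * s i \<Longrightarrow> diag_block d A i $$ (p, q)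
           = minv (bond_pad A (i - 1)) $$ (q div s i, p div s i) * bond_pad A i $$ (p mod s i, q mod s i)"
proof -
  have minv: "minv (A l) \<in> carrier_mat (s l) (s l)" if "l \<in> {1..d-1}" for l
    using A that minv_inverse(1) by blast
  consider "i = 1" | "i = d" | "1 < i" "i < d" using i by fastforce
  then have "diag_block d A i \<in> carrier_mat (s (i - 1) * s i) (s (i - 1) * s i) \<and>
    (p < s (i - 1) * s i \<longrightarrow> q < s (i - 1) * s i \<longrightarrow> diag_block d A i $$ (p, q)
       = minv (bond_pad A (i - 1)) $$ (q div s i, p div s i) * bond_pad A i $$ (p mod s i, q mod s i))"
  proof cases
    case 1
    then have "A 1 \<in> carrier_mat (s 1) (s 1)" "1 \<in> {1..d-1}" using A two_le_d by auto
    then show ?thesis using 1 bond_0 by (simp add: diag_block_def bond_pad_def minv_one)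
  next
    case 2
    then have "minv (A (d - 1)) \<in> carrier_mat (s (d - 1)) (s (d - 1))" "d \<noteq> 1" "d - 1 \<in> {1..d-1}"
      "d \<notin> {1..d-1}"
      using minv two_le_d by auto
    then show ?thesis using 2 bond_d by (simp add: diag_block_def bond_pad_def minvT_def)
  next
    case 3
    then have "i - 1 \<in> {1..d-1}" "i \<in> {1..d-1}" "i \<noteq> 1" "i \<noteq> d" by auto
    moreover from this have "minv (A (i - 1)) \<in> carrier_mat (s (i - 1)) (s (i - 1))"
      "A i \<in> carrier_mat (s i) (s i)"
      using A minv by auto
    ultimately show ?thesis
      by (auto simp: diag_block_def kron_def minvT_def bond_pad_def less_mult_imp_div_less)
  qed
  then show "diag_block d A i \<in> carrier_mat (s (i - 1) * s i) (s (i - 1) * s i)"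
    and "p < s (i - 1) * s i \<Longrightarrow> q < s (i - 1) * s i \<Longrightarrow> diag_block d A i $$ (p, q)
           = minv (bond_pad A (i - 1)) $$ (q div s i, p div s i) * bond_pad A i $$ (p mod s i, q mod s i)"
    by auto
qed

lemma stab_form_imp_core_kron_form:
  assumes "stab_form d n s g"
  obtains A where "\<forall>i\<in>{1..d-1}. A i \<in> carrier_mat (s i) (s i) \<and> invertible_mat (A i)"
    and "\<forall>i\<in>{1..d}. core_kron_form g i (bond_pad A (i - 1)) (bond_pad A i)"
proof -
  obtain A B M where A: "\<forall>i\<in>{1..d-1}. A i \<in> carrier_mat (s i) (s i) \<and> invertible_mat (A i)"
    and B: "\<forall>i\<in>{1..d}. B i \<in> carrier_mat (n i - s (i - 1) * s i) (n i - s (i - 1) * s i)"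
    and g: "\<forall>i\<in>{1..d}. g i = four_block_mat (diag_block d A i) (M i)
                            (0\<^sub>m (n i - s (i - 1) * s i) (s (i - 1) * s i)) (B i)"
    using assms unfolding stab_form_def by blast
  have "core_kron_form g i (bond_pad A (i - 1)) (bond_pad A i)" if i: "i \<in> {1..d}" for i
    unfolding core_kron_form_def
  proof (intro allI impI)
    fix p q assume p: "p < n i" and q: "q < s (i - 1) * s i"
    have m: "s (i - 1) * s i \<le> n i" using bond_le_dim i by auto
    have Bi: "B i \<in> carrier_mat (n i - s (i - 1) * s i) (n i - s (i - 1) * s i)"
      and gi: "g i = four_block_mat (diag_block d A i) (M i)
                            (0\<^sub>m (n i - s (i - 1) * s i) (s (i - 1) * s i)) (B i)"
      using g B i by auto
    have "g i $$ (p, q) = (if p < s (i - 1) * s i then diag_block d A i $$ (p, q) else 0)"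
      using p q m Bi diag_block_entry(1)[OF A i] unfolding gi by auto
    then show "g i $$ (p, q) = (if p < s (i - 1) * s i then minv (bond_pad A (i - 1)) $$ (q div s i, p div s i)
        * bond_pad A i $$ (p mod s i, q mod s i) else 0)"
      using diag_block_entry(2)[OF A i _ q] by auto
  qed
  with A show thesis using that by blast
qed

lemma stab_form_of_core_kron_form:
  assumes gG: "in_G d n g" and A: "\<forall>i\<in>{1..d-1}. A i \<in> carrier_mat (s i) (s i) \<and> invertible_mat (A i)"
    and kron: "\<forall>i\<in>{1..d}. core_kron_form g i (bond_pad A (i - 1)) (bond_pad A i)"
  shows "stab_form d n s g"
proof -
  define m where "m i = s (i - 1) * s i" for i
  define M where "M i = mat (m i) (n i - m i) (\<lambda>(p, q). g i $$ (p, q + m i))" for i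
  define B where "B i = mat (n i - m i) (n i - m i) (\<lambda>(p, q). g i $$ (p + m i, q + m i))" for i
  have split: "g i = four_block_mat (diag_block d A i) (M i) (0\<^sub>m (n i - m i) (m i)) (B i)"
    and "invertible_mat (B i)" if i: "i \<in> {1..d}" for i
  proof -
    have "m i \<le> n i" using bond_le_dim i unfolding m_def by auto
    moreover have "g i \<in> carrier_mat (n i) (n i)" "invertible_mat (g i)"
      using gG i unfolding in_G_def by auto
    ultimately have g: "g i \<in> carrier_mat (m i + (n i - m i)) (m i + (n i - m i))" "invertible_mat (g i)"
      by simp_all
    have D: "diag_block d A i \<in> carrier_mat (m i) (m i)"
      using diag_block_entry(1)[OF A i] unfolding m_def .
    have "\<forall>p<m i + (n i - m i). \<forall>q<m i. g i $$ (p, q) = (if p < m i then diag_block d A i $$ (p, q) else 0)"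
    proof (intro allI impI)
      fix p q assume "p < m i + (n i - m i)" and q: "q < m i"
      then have "p < n i" using \<open>m i \<le> n i\<close> by linarith
      then show "g i $$ (p, q) = (if p < m i then diag_block d A i $$ (p, q) else 0)"
        using kron i q diag_block_entry(2)[OF A i] unfolding core_kron_form_def m_def by auto
    qed
    from four_block_mat_lower_left_zero_split[OF g(1) D this]
    show split: "g i = four_block_mat (diag_block d A i) (M i) (0\<^sub>m (n i - m i) (m i)) (B i)"
      unfolding M_def B_def .
    show "invertible_mat (B i)"
      using invertible_four_block_mat_lower_right[OF D _ _ g(2)[unfolded split]]
      by (simp add: M_def B_def)
  qed
  show ?thesis
    unfolding stab_form_def
    using A split \<open>\<And>i. i \<in> {1..d} \<Longrightarrow> invertible_mat (B i)\<close>
    by (intro exI[of _ A] exI[of _ B] exI[of _ M]) (auto simp: M_def B_def m_def)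
qed

lemma left_gauge_bond_pad:
  assumes stab: "\<forall>j\<in>multi_idx d n. act d n g (T_tensor d s) j = T_tensor d s j"
    and A: "\<forall>i\<in>{1..d-1}. left_gauge g i (A i)" and i: "i \<le> d"
  shows "left_gauge g i (bond_pad A i)"
proof -
  consider "i = 0" | "i = d" | "i \<in> {1..d-1}" using i by fastforce
  then show ?thesis
  proof cases
    case 1
    show ?thesis unfolding 1 bond_pad_0 by (rule left_gauge_0)
  next
    case 2
    show ?thesis unfolding 2 bond_pad_d left_gauge_last_iff by (rule stab)
  qed (use A in \<open>simp add: bond_pad_def\<close>)
qed

lemma invertible_of_core_gauges:
  assumes gG: "in_G d n g" and B0: "invertible_mat (B 0)"
    and carrier: "\<forall>i\<le>d. B i \<in> carrier_mat (s i) (s i)"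
    and core: "\<forall>i\<in>{1..d}. core_gauge g i (B (i - 1)) (B i)"
  shows "i \<le> d \<Longrightarrow> invertible_mat (B i)"
proof (induction i)
  case (Suc i)
  then have i: "Suc i \<in> {1..d}" by simp
  have g: "g (Suc i) \<in> carrier_mat (n (Suc i)) (n (Suc i))" "invertible_mat (g (Suc i))"
    using gG i unfolding in_G_def by auto
  have "core_kron_form g (Suc i) (B i) (B (Suc i))"
    using Suc carrier core[rule_format, OF i] by (intro core_kron_form_of_core_gauge[OF i]) auto
  then show ?case
    using invertible_of_core_kron_form[where g = g, OF i g] carrier Suc.prems by blast
qed (rule B0)

lemma stabilizer_imp_core_kron_form:
  assumes gG: "in_G d n g" and stab: "\<forall>j\<in>multi_idx d n. act d n g (T_tensor d s) j = T_tensor d s j"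
  obtains A where "\<forall>i\<in>{1..d-1}. A i \<in> carrier_mat (s i) (s i) \<and> invertible_mat (A i)"
    and "\<forall>i\<in>{1..d}. core_kron_form g i (bond_pad A (i - 1)) (bond_pad A i)"
proof -
  have "\<forall>i\<in>{1..d-1}. \<exists>A. A \<in> carrier_mat (s i) (s i) \<and> left_gauge g i A"
    using left_gauge_exists[OF gG stab] by (metis (no_types))
  from bchoice[OF this] obtain A
    where A: "\<forall>i\<in>{1..d-1}. A i \<in> carrier_mat (s i) (s i) \<and> left_gauge g i (A i)"
    by blast
  have carrier: "\<forall>i\<le>d. bond_pad A i \<in> carrier_mat (s i) (s i)"
    using A by (auto intro: bond_pad_carrier_mat)
  have core: "\<forall>i\<in>{1..d}. core_gauge g i (bond_pad A (i - 1)) (bond_pad A i)"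
  proof
    fix i assume i: "i \<in> {1..d}"
    then show "core_gauge g i (bond_pad A (i - 1)) (bond_pad A i)"
      using A by (intro core_gauge_of_left_gauge[OF i] left_gauge_bond_pad[OF stab]) auto
  qed
  have inv: "invertible_mat (bond_pad A i)" if "i \<le> d" for i
    using invertible_of_core_gauges[OF gG _ carrier core that] by (simp add: bond_pad_0 invertible_one_mat)
  show thesis
  proof (rule that)
    show "\<forall>i\<in>{1..d-1}. A i \<in> carrier_mat (s i) (s i) \<and> invertible_mat (A i)"
    proof
      fix i assume i: "i \<in> {1..d-1}"
      then have "i \<le> d" by auto
      then show "A i \<in> carrier_mat (s i) (s i) \<and> invertible_mat (A i)"
        using A inv[of i] i by (simp add: bond_pad_inner)
    qed
    show "\<forall>i\<in>{1..d}. core_kron_form g i (bond_pad A (i - 1)) (bond_pad A i)"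
    proof
      fix i assume i: "i \<in> {1..d}"
      then show "core_kron_form g i (bond_pad A (i - 1)) (bond_pad A i)"
        using carrier core inv by (intro core_kron_form_of_core_gauge[OF i]) auto
    qed
  qed
qed

lemma core_kron_form_imp_stabilizer:
  assumes A: "\<forall>i\<in>{1..d-1}. A i \<in> carrier_mat (s i) (s i) \<and> invertible_mat (A i)"
    and kron: "\<forall>i\<in>{1..d}. core_kron_form g i (bond_pad A (i - 1)) (bond_pad A i)"
  shows "\<forall>j\<in>multi_idx d n. act d n g (T_tensor d s) j = T_tensor d s j"
proof -
  have "left_gauge g i (bond_pad A i)" if "i \<le> d" for i
    using that
  proof (induction i)
    case 0
    show ?case unfolding bond_pad_0 by (rule left_gauge_0)
  next
    case (Suc i)
    then have i: "Suc i \<in> {1..d}" by simp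
    have "bond_pad A i \<in> carrier_mat (s i) (s i)" "invertible_mat (bond_pad A i)"
      using A Suc.prems by (auto intro: bond_pad_carrier_mat bond_pad_invertible)
    then have "core_gauge g (Suc i) (bond_pad A i) (bond_pad A (Suc i))"
      using kron[rule_format, OF i] by (intro core_gauge_of_core_kron_form[OF i]) auto
    then show ?case using left_gauge_step[OF i] Suc by simp
  qed
  then have "left_gauge g d (1\<^sub>m 1)" using bond_pad_d by (metis order_refl)
  then show ?thesis unfolding left_gauge_last_iff .
qed

end

theorem mainTheorem12:
  fixes d :: nat and n s :: "nat \<Rightarrow> nat"
  assumes "d \<ge> 3"
    and "\<forall>i\<in>{1..d}. n i \<ge> 2"
    and "\<forall>i\<in>{1..d-1}. s i \<ge> 1"
    and "s 0 = 1" and "s d = 1"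
    and "\<forall>i\<in>{1..d}. s (i-1) * s i \<le> n i"
  shows "\<forall>g. in_G d n g \<longrightarrow>
           ((\<forall>j\<in>multi_idx d n. act d n g (T_tensor d s) j = T_tensor d s j)
            \<longleftrightarrow> stab_form d n s g)"
proof -
  interpret mps_format d n s
    using assms by unfold_locales auto
  show ?thesis
  proof (intro allI impI iffI)
    fix g assume g: "in_G d n g"
    {
      assume "\<forall>j\<in>multi_idx d n. act d n g (T_tensor d s) j = T_tensor d s j"
      then obtain A where "\<forall>i\<in>{1..d-1}. A i \<in> carrier_mat (s i) (s i) \<and> invertible_mat (A i)"
        and "\<forall>i\<in>{1..d}. core_kron_form g i (bond_pad A (i - 1)) (bond_pad A i)"
        using stabilizer_imp_core_kron_form[OF g] by blast
      then show "stab_form d n s g" by (rule stab_form_of_core_kron_form[OF g])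
    next
      assume "stab_form d n s g"
      then obtain A where "\<forall>i\<in>{1..d-1}. A i \<in> carrier_mat (s i) (s i) \<and> invertible_mat (A i)"
        and "\<forall>i\<in>{1..d}. core_kron_form g i (bond_pad A (i - 1)) (bond_pad A i)"
        by (rule stab_form_imp_core_kron_form)
      then show "\<forall>j\<in>multi_idx d n. act d n g (T_tensor d s) j = T_tensor d s j"
        by (rule core_kron_form_imp_stabilizer)
    }
  qed
qed

end
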